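(* Let $\sigma$ be a nonempty finite sequence of nonnegative integers avoiding both patterns $010$ and $210$. Let $q$ be the largest value $\sigma_l$ of $\sigma$ such that there is $i<l$ with $\sigma_i>\sigma_l$, or $q=0$ if no such value exists (i.e. $\sigma$ is nondecreasing), and let $r$ be the number of distinct values of $\sigma$ that are $\geqslant q$. Then $\mathrm{forb}(\sigma,\{010,210\})=q+r$.
   Context: A sequence contains a pattern $p$ if some subsequence is order-isomorphic to $p$; otherwise it avoids $p$. Avoiding $010$: no $i<j<l$ with $\sigma_i=\sigma_l<\sigma_j$. Avoiding $210$: no $i<j<l$ with $\sigma_i>\sigma_j>\sigma_l$. For a sequence $\sigma$ avoiding a set of patterns $P$, a value $v\in\{0,\dots,\max(\sigma)\}$ is forbidden by $\sigma$ and $P$ if the sequence $\sigma\cdot (M,v)$ (σ followed by $M$ then $v$) contains some pattern of $P$, where $M>\max(\sigma)$; $\mathrm{forb}(\sigma,P)$ is the number of such forbidden values. *)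

theory Defs
  imports Main
begin

definition order_iso :: "nat list \<Rightarrow> nat list \<Rightarrow> bool" where
  "order_iso s p \<longleftrightarrow> length s = length p \<and>
     (\<forall>i<length p. \<forall>j<length p. (s ! i < s ! j \<longleftrightarrow> p ! i < p ! j))"

definition contains :: "nat list \<Rightarrow> nat list \<Rightarrow> bool" where
  "contains \<sigma> p \<longleftrightarrow> (\<exists>I. I \<subseteq> {..<length \<sigma>} \<and> order_iso (nths \<sigma> I) p)"

definition avoids :: "nat list \<Rightarrow> nat list \<Rightarrow> bool" where
  "avoids \<sigma> p \<longleftrightarrow> \<not> contains \<sigma> p"

text \<open>Forbidden values; M is taken to be max(sigma)+1 (pattern containment
  only depends on relative order, so any M > max(sigma) gives the same result).\<close>
definition forb :: "nat list \<Rightarrow> nat list set \<Rightarrow> nat" where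
  "forb \<sigma> P = card {v \<in> {0..Max (set \<sigma>)}.
      \<exists>p\<in>P. contains (\<sigma> @ [Suc (Max (set \<sigma>)), v]) p}"

definition q_val :: "nat list \<Rightarrow> nat" where
  "q_val \<sigma> = (let S = {\<sigma> ! l | l. l < length \<sigma> \<and> (\<exists>i<l. \<sigma> ! i > \<sigma> ! l)}
               in if S = {} then 0 else Max S)"

definition r_val :: "nat list \<Rightarrow> nat" where
  "r_val \<sigma> = card {x \<in> set \<sigma>. x \<ge> q_val \<sigma>}"

end

theory Submission
  imports Defs "HOL-Library.Sublist"
begin

text \<open>Let \<open>M\<close> exceed every entry of \<open>\<sigma>\<close>. As \<open>\<sigma>\<close> avoids both patterns, an
  occurrence in \<open>\<sigma> @ [M, v]\<close> must use a new entry. An occurrence of \<open>010\<close> then reads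
  \<open>v M v\<close> or \<open>v b v\<close> with \<open>v\<close> in \<open>\<sigma>\<close>, so it exists iff \<open>v\<close> occurs in \<open>\<sigma>\<close>.
  \<open>M\<close> is too large to take part in an occurrence of \<open>210\<close>, which therefore reads \<open>x y v\<close>
  with a descent \<open>x > y\<close> of \<open>\<sigma>\<close> and \<open>v < y\<close>; it exists iff \<open>v < q\<close>. So the forbidden
  values are \<open>set \<sigma> \<union> {..<q}\<close>, and there are \<open>q + r\<close> of them.\<close>

lemma nths_inter_lessThan_length: "nths xs (I \<inter> {..<length xs}) = nths xs I"
  unfolding nths_def
  by (rule arg_cong[where f = "map fst"]) (auto intro!: filter_cong simp: set_zip)

lemma contains_iff_subseq: "contains s p \<longleftrightarrow> (\<exists>xs. subseq xs s \<and> order_iso xs p)"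
proof
  assume "contains s p"
  then show "\<exists>xs. subseq xs s \<and> order_iso xs p"
    unfolding contains_def subseq_conv_nths by blast
next
  assume "\<exists>xs. subseq xs s \<and> order_iso xs p"
  then obtain I where "order_iso (nths s I) p"
    unfolding subseq_conv_nths by blast
  then show "contains s p"
    unfolding contains_def
    by (intro exI[of _ "I \<inter> {..<length s}"]) (simp add: nths_inter_lessThan_length)
qed

lemma subseq_set_subset: "subseq xs ys \<Longrightarrow> set xs \<subseteq> set ys"
  by (auto elim: list_emb_set)

lemma order_iso_length3_iff:
  "order_iso s [a, b, c] \<longleftrightarrow> (\<exists>x y z. s = [x, y, z] \<and>
     (\<forall>i<3. \<forall>j<3. [x, y, z] ! i < [x, y, z] ! j \<longleftrightarrow> [a, b, c] ! i < [a, b, c] ! j))"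
  unfolding order_iso_def by (auto simp: length_Suc_conv numeral_3_eq_3)

lemma all_less_3: "(\<forall>i<3. P i) \<longleftrightarrow> P 0 \<and> P 1 \<and> P (2::nat)"
  by (auto simp: numeral_3_eq_3 numeral_2_eq_2 less_Suc_eq)

lemma order_iso_010_iff: "order_iso s [0, 1, 0] \<longleftrightarrow> (\<exists>a b. s = [a, b, a] \<and> a < b)"
  unfolding order_iso_length3_iff all_less_3 by auto

lemma order_iso_210_iff: "order_iso s [2, 1, 0] \<longleftrightarrow> (\<exists>a b c. s = [a, b, c] \<and> c < b \<and> b < a)"
  unfolding order_iso_length3_iff all_less_3 by auto

lemma subseq_singleton_right: "subseq xs [a] \<longleftrightarrow> xs = [] \<or> xs = [a]"
  by (cases xs) auto

lemma subseq_doubleton_right: "subseq xs [a, b] \<longleftrightarrow> xs \<in> {[], [a], [b], [a, b]}"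
  by (cases xs) (auto simp: subseq_singleton_right)

lemma subseq_append_doubletonE:
  assumes "subseq xs (ys @ [a, b])"
  obtains zs where "subseq zs ys" and "xs \<in> {zs, zs @ [a], zs @ [b], zs @ [a, b]}"
  using assms by (auto elim!: subseq_appendE simp: subseq_doubleton_right)

lemma subseq_doubleton_left:
  "subseq [x, y] xs \<longleftrightarrow> (\<exists>i l. i < l \<and> l < length xs \<and> xs ! i = x \<and> xs ! l = y)"
proof (induction xs)
  case (Cons z zs)
  have "subseq [x, y] (z # zs) \<longleftrightarrow> (x = z \<and> y \<in> set zs) \<or> subseq [x, y] zs"
    by (auto simp: subseq_singleton_left dest: subseq_Cons')
  also have "\<dots> \<longleftrightarrow> (\<exists>i l. i < l \<and> l < length (z # zs) \<and> (z # zs) ! i = x \<and> (z # zs) ! l = y)"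
  proof
    assume "(x = z \<and> y \<in> set zs) \<or> subseq [x, y] zs"
    then show "\<exists>i l. i < l \<and> l < length (z # zs) \<and> (z # zs) ! i = x \<and> (z # zs) ! l = y"
    proof
      assume "x = z \<and> y \<in> set zs"
      then obtain l where "l < length zs" "zs ! l = y" "x = z" by (auto simp: in_set_conv_nth)
      then show ?thesis by (intro exI[of _ 0] exI[of _ "Suc l"]) simp
    next
      assume "subseq [x, y] zs"
      then obtain i l where "i < l" "l < length zs" "zs ! i = x" "zs ! l = y"
        using Cons.IH by blast
      then show ?thesis by (intro exI[of _ "Suc i"] exI[of _ "Suc l"]) simp
    qed
  next
    assume "\<exists>i l. i < l \<and> l < length (z # zs) \<and> (z # zs) ! i = x \<and> (z # zs) ! l = y"
    then obtain i l where il: "i < l" "l < Suc (length zs)" "(z # zs) ! i = x" "(z # zs) ! l = y"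
      by auto
    then obtain l' where l': "l = Suc l'" by (cases l) auto
    show "(x = z \<and> y \<in> set zs) \<or> subseq [x, y] zs"
    proof (cases i)
      case 0
      then show ?thesis using il l' by auto
    next
      case (Suc i')
      then show ?thesis using il l' Cons.IH by auto
    qed
  qed
  finally show ?case .
qed simp

definition descent_bottoms :: "nat list \<Rightarrow> nat set" where
  "descent_bottoms \<sigma> = {y. \<exists>x. subseq [x, y] \<sigma> \<and> y < x}"

lemma contains_010_append_max_iff:
  assumes "avoids \<sigma> [0, 1, 0]" and "\<forall>x\<in>set \<sigma>. x < M"
  shows "contains (\<sigma> @ [M, v]) [0, 1, 0] \<longleftrightarrow> v \<in> set \<sigma>"
proof
  assume "contains (\<sigma> @ [M, v]) [0, 1, 0]"
  then obtain a b where "subseq [a, b, a] (\<sigma> @ [M, v])" and "a < b"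
    unfolding contains_iff_subseq order_iso_010_iff by blast
  then obtain zs where zs: "subseq zs \<sigma>" and "[a, b, a] \<in> {zs, zs @ [M], zs @ [v], zs @ [M, v]}"
    by (elim subseq_append_doubletonE)
  moreover have "[a, b, a] \<noteq> zs"
    using assms(1) zs \<open>a < b\<close> unfolding avoids_def contains_iff_subseq order_iso_010_iff by blast
  ultimately have "a \<in> set zs \<and> (a = M \<or> a = v)"
    by (auto simp: append_eq_Cons_conv Cons_eq_append_conv)
  then show "v \<in> set \<sigma>"
    using assms(2) subseq_set_subset[OF zs] by blast
next
  assume "v \<in> set \<sigma>"
  then have "subseq ([v] @ [M, v]) (\<sigma> @ [M, v])"
    by (intro list_emb_append_mono) (simp_all add: subseq_singleton_left)
  moreover have "v < M" using assms(2) \<open>v \<in> set \<sigma>\<close> by blast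
  ultimately show "contains (\<sigma> @ [M, v]) [0, 1, 0]"
    unfolding contains_iff_subseq order_iso_010_iff by auto
qed

lemma contains_210_append_max_iff:
  assumes "avoids \<sigma> [2, 1, 0]" and "\<forall>x\<in>set \<sigma>. x < M"
  shows "contains (\<sigma> @ [M, v]) [2, 1, 0] \<longleftrightarrow> (\<exists>y\<in>descent_bottoms \<sigma>. v < y)"
proof
  assume "contains (\<sigma> @ [M, v]) [2, 1, 0]"
  then obtain a b c where "subseq [a, b, c] (\<sigma> @ [M, v])" and "c < b" "b < a"
    unfolding contains_iff_subseq order_iso_210_iff by blast
  then obtain zs where zs: "subseq zs \<sigma>" and "[a, b, c] \<in> {zs, zs @ [M], zs @ [v], zs @ [M, v]}"
    by (elim subseq_append_doubletonE)
  moreover have "[a, b, c] \<noteq> zs"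
    using assms(1) zs \<open>c < b\<close> \<open>b < a\<close> unfolding avoids_def contains_iff_subseq order_iso_210_iff
    by blast
  ultimately have "(b \<in> set zs \<and> c = M) \<or> (zs = [a, b] \<and> c = v) \<or> (a \<in> set zs \<and> b = M)"
    by (auto simp: append_eq_Cons_conv Cons_eq_append_conv)
  moreover have "\<forall>x\<in>set zs. x < M"
    using assms(2) subseq_set_subset[OF zs] by blast
  ultimately have "zs = [a, b] \<and> c = v"
    using \<open>c < b\<close> \<open>b < a\<close> by auto
  then show "\<exists>y\<in>descent_bottoms \<sigma>. v < y"
    using zs \<open>c < b\<close> \<open>b < a\<close> unfolding descent_bottoms_def by blast
next
  assume "\<exists>y\<in>descent_bottoms \<sigma>. v < y"
  then obtain x y where "subseq [x, y] \<sigma>" "y < x" "v < y"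
    unfolding descent_bottoms_def by blast
  moreover from this(1) have "subseq ([x, y] @ [v]) (\<sigma> @ [M, v])"
    by (intro list_emb_append_mono) simp_all
  ultimately show "contains (\<sigma> @ [M, v]) [2, 1, 0]"
    unfolding contains_iff_subseq order_iso_210_iff by auto
qed

lemma descent_bottoms_subset: "descent_bottoms \<sigma> \<subseteq> set \<sigma>"
  unfolding descent_bottoms_def by (auto simp: subseq_singleton_left dest: subseq_Cons')

lemma q_val_eq_Max_descent_bottoms:
  "q_val \<sigma> = (if descent_bottoms \<sigma> = {} then 0 else Max (descent_bottoms \<sigma>))"
proof -
  have "{\<sigma> ! l | l. l < length \<sigma> \<and> (\<exists>i<l. \<sigma> ! i > \<sigma> ! l)} = descent_bottoms \<sigma>"
    unfolding descent_bottoms_def subseq_doubleton_left by fastforce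
  then show ?thesis unfolding q_val_def by simp
qed

lemma less_q_val_iff: "v < q_val \<sigma> \<longleftrightarrow> (\<exists>y\<in>descent_bottoms \<sigma>. v < y)"
  using finite_subset[OF descent_bottoms_subset]
  by (simp add: q_val_eq_Max_descent_bottoms Max_gr_iff)

lemma q_val_le_Max: "q_val \<sigma> \<le> Max (set \<sigma>)"
  using descent_bottoms_subset[of \<sigma>] finite_subset[OF descent_bottoms_subset]
  by (auto simp: q_val_eq_Max_descent_bottoms intro: Max_mono)

lemma card_Un_lessThan:
  fixes A :: "nat set"
  assumes "finite A"
  shows "card (A \<union> {..<q}) = q + card {x \<in> A. q \<le> x}"
proof -
  have "A \<union> {..<q} = {..<q} \<union> {x \<in> A. q \<le> x}" by auto
  then show ?thesis using assms by (simp add: card_Un_disjoint disjoint_iff)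
qed

lemma forbidden_values_010_210:
  assumes "avoids \<sigma> [0, 1, 0]" and "avoids \<sigma> [2, 1, 0]"
  shows "{v \<in> {0..Max (set \<sigma>)}. \<exists>p\<in>{[0, 1, 0], [2, 1, 0]}.
           contains (\<sigma> @ [Suc (Max (set \<sigma>)), v]) p} = set \<sigma> \<union> {..<q_val \<sigma>}"
proof -
  have M: "\<forall>x\<in>set \<sigma>. x < Suc (Max (set \<sigma>))" by (simp add: le_imp_less_Suc)
  have "v \<in> set \<sigma> \<union> {..<q_val \<sigma>} \<Longrightarrow> v \<le> Max (set \<sigma>)" for v
    using q_val_le_Max[of \<sigma>] by auto
  then show ?thesis
    using contains_010_append_max_iff[OF assms(1) M] contains_210_append_max_iff[OF assms(2) M]
    by (auto simp: less_q_val_iff)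
qed

theorem mainTheorem8:
  fixes \<sigma> :: "nat list"
  assumes "\<sigma> \<noteq> []"
    and "avoids \<sigma> [0, 1, 0]"
    and "avoids \<sigma> [2, 1, 0]"
  shows "forb \<sigma> {[0, 1, 0], [2, 1, 0]} = q_val \<sigma> + r_val \<sigma>"
  unfolding forb_def forbidden_values_010_210[OF assms(2,3)] r_val_def
  by (simp add: card_Un_lessThan)
end
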